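(* Let $\pi$ be a supercuspidal representation of $G$ with trivial central character and $a(\pi)=4n$, $n\ge1$, let $T$ be an inert torus in canonical form, let $\chi_\pi=\chi_{\theta_\pi,T}$, and let $v_0\in\pi$ be a minimal vector for $T$. Let $\Phi_0(g)=\langle\pi(g)v_0,v_0\rangle/\langle v_0,v_0\rangle$, where $\langle\cdot,\cdot\rangle$ is a $G$-invariant inner product on $\pi$. Then $\Phi_0(g)=\chi_\pi(g)$ for $g\in ZK_T(n)$ and $\Phi_0(g)=0$ for $g\notin ZK_T(n)$.
   Context: $F$ is a non-archimedean local field of characteristic zero with ring of integers $\mathfrak o$, maximal ideal $\mathfrak p$, uniformizer $\varpi$, odd residue cardinality; $E$ the unramified quadratic extension; $G=\mathrm{GL}_2(F)$, $Z$ its centre. $\psi$ is an additive character of $F$ trivial on $\mathfrak o$ but not $\varpi^{-1}\mathfrak o$, $\psi_E=\psi\circ\mathrm{Tr}_{E/F}$. $a(\pi)$ is the conductor exponent of $\pi$; for a character $\chi$ of $E^\times$, $a(\chi)$ is the least $m\ge0$ with $\chi$ trivial on $\{x\in\mathfrak o_E^\times:v(x-1)\ge m\}$. Inert torus in canonical form: $T=T_\alpha=\{\begin{pmatrix}x&y\\-\alpha y&x\end{pmatrix}\ne0\}$, $\alpha\in\mathfrak o^\times$, $-\alpha$ non-square, identified with $E^\times$ via $x+y\sqrt{-\alpha}\mapsto\begin{pmatrix}x&y\\-\alpha y&x\end{pmatrix}$; $w_\alpha=\begin{pmatrix}0&1\\-\alpha&0\end{pmatrix}$; $K(n)=\{g\in\mathrm{GL}_2(\mathfrak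 o):g\equiv1\bmod\mathfrak p^n\}$; $K_T(n)=\{\begin{pmatrix}a&b\\c&d\end{pmatrix}\in\mathrm{GL}_2(\mathfrak o):a-d,\ c+b\alpha\in\mathfrak p^n\}$, $ZK_T(n)=TK(n)$. For $\theta$ with $a(\theta)=2n$, $\theta|_{F^\times}=1$: fix $a_{\theta,T}\in\mathfrak o^\times$ with $\psi_E(\varpi^{-n}a_{\theta,T}\sqrt{-\alpha}u)=\theta(1+\varpi^nu)$ ($u\in\mathfrak o_E$), and $\chi_{\theta,T}(t(1+\varpi^ng))=\theta(t)\psi(\varpi^{-n}a_{\theta,T}\mathrm{Tr}(w_\alpha g))$, a character of $ZK_T(n)$. $\theta_\pi$ is a fixed character of $E^\times$ with $a(\theta_\pi)=2n$, $\theta_\pi|_{F^\times}=1$ and $\pi\simeq c\text{-}\mathrm{Ind}_{ZK_T(n)}^G\chi_{\theta_\pi,T}$ for all such $T$. A minimal vector for $T$ is a nonzero $v\in\pi$ with $\pi(k)v=\chi_{\theta_\pi,T}(k)v$ for all $k\in ZK_T(n)$. *)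

theory Defs
  imports "HOL-Analysis.Analysis"
begin

text \<open>
  The local field F is a type 'f of class field_char_0 together
  with a normalized discrete valuation nu (its value at 0 is irrelevant; every
  use is guarded by nonzeroness).  Matrices are elements of 'f^2^2.
  The unramified quadratic extension E is realised as pairs (x,y) standing for
  x + y sqrt(-alpha), which is exactly the identification of E^x with T_alpha.
\<close>

definition inP :: "('f::field \<Rightarrow> int) \<Rightarrow> int \<Rightarrow> 'f \<Rightarrow> bool" where
  "inP nu k x \<longleftrightarrow> x = 0 \<or> k \<le> nu x"

definition inO :: "('f::field \<Rightarrow> int) \<Rightarrow> 'f \<Rightarrow> bool" where
  "inO nu x \<longleftrightarrow> inP nu 0 x"

definition isUnit :: "('f::field \<Rightarrow> int) \<Rightarrow> 'f \<Rightarrow> bool" where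
  "isUnit nu x \<longleftrightarrow> x \<noteq> 0 \<and> nu x = 0"

definition residue_card :: "('f::field \<Rightarrow> int) \<Rightarrow> nat" where
  "residue_card nu = card ({x. inO nu x} // {(x,y). inO nu x \<and> inO nu y \<and> inP nu 1 (x - y)})"

definition nonarch_local_field :: "('f::field_char_0 \<Rightarrow> int) \<Rightarrow> bool" where
  "nonarch_local_field nu \<longleftrightarrow>
     (\<forall>x y. x \<noteq> 0 \<longrightarrow> y \<noteq> 0 \<longrightarrow> nu (x * y) = nu x + nu y) \<and>
     (\<forall>x y. x \<noteq> 0 \<longrightarrow> y \<noteq> 0 \<longrightarrow> x + y \<noteq> 0 \<longrightarrow> min (nu x) (nu y) \<le> nu (x + y)) \<and>
     (\<exists>w. w \<noteq> 0 \<and> nu w = 1) \<and>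
     (\<forall>s :: nat \<Rightarrow> 'f. (\<forall>k. \<exists>N. \<forall>m\<ge>N. \<forall>m'\<ge>N. inP nu k (s m - s m')) \<longrightarrow>
          (\<exists>L. \<forall>k. \<exists>N. \<forall>m\<ge>N. inP nu k (s m - L))) \<and>
     finite ({x. inO nu x} // {(x,y). inO nu x \<and> inO nu y \<and> inP nu 1 (x - y)})"

definition std_add_char :: "('f::field \<Rightarrow> int) \<Rightarrow> 'f \<Rightarrow> ('f \<Rightarrow> complex) \<Rightarrow> bool" where
  "std_add_char nu w psi \<longleftrightarrow>
     (\<forall>x y. psi (x + y) = psi x * psi y) \<and>
     (\<forall>x. inO nu x \<longrightarrow> psi x = 1) \<and>
     (\<exists>x. inO nu x \<and> psi (inverse w * x) \<noteq> 1)"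

definition emul :: "'f::field \<Rightarrow> 'f \<times> 'f \<Rightarrow> 'f \<times> 'f \<Rightarrow> 'f \<times> 'f" where
  "emul alpha z z' = (fst z * fst z' - alpha * snd z * snd z', fst z * snd z' + snd z * fst z')"

definition etr :: "'f::field \<times> 'f \<Rightarrow> 'f" where
  "etr z = 2 * fst z"

definition enorm :: "'f::field \<Rightarrow> 'f \<times> 'f \<Rightarrow> 'f" where
  "enorm alpha z = fst z ^ 2 + alpha * snd z ^ 2"

definition EU :: "('f::field \<Rightarrow> int) \<Rightarrow> 'f \<Rightarrow> nat \<Rightarrow> ('f \<times> 'f) set" where
  "EU nu alpha m = {z. inO nu (fst z) \<and> inO nu (snd z) \<and> isUnit nu (enorm alpha z)
                      \<and> inP nu (int m) (fst z - 1) \<and> inP nu (int m) (snd z)}"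

definition char_E :: "('f::field \<Rightarrow> int) \<Rightarrow> 'f \<Rightarrow> ('f \<times> 'f \<Rightarrow> complex) \<Rightarrow> bool" where
  "char_E nu alpha theta \<longleftrightarrow>
     (\<forall>z w. z \<noteq> (0,0) \<longrightarrow> w \<noteq> (0,0) \<longrightarrow> theta (emul alpha z w) = theta z * theta w) \<and>
     (\<forall>z. z \<noteq> (0,0) \<longrightarrow> theta z \<noteq> 0) \<and>
     (\<exists>m. \<forall>z\<in>EU nu alpha m. theta z = 1)"

definition cond_E :: "('f::field \<Rightarrow> int) \<Rightarrow> 'f \<Rightarrow> ('f \<times> 'f \<Rightarrow> complex) \<Rightarrow> nat" where
  "cond_E nu alpha theta = (LEAST m. \<forall>z\<in>EU nu alpha m. theta z = 1)"

definition mk2 :: "'a \<Rightarrow> 'a \<Rightarrow> 'a \<Rightarrow> 'a \<Rightarrow> 'a^2^2" where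
  "mk2 a b c d = (\<chi> i j. if i = 1 then (if j = 1 then a else b) else (if j = 1 then c else d))"

definition GL2 :: "('f::field^2^2) set" where
  "GL2 = {g. det g \<noteq> 0}"

definition centre :: "('f::field^2^2) set" where
  "centre = {mat z | z. z \<noteq> 0}"

definition M2o :: "('f::field \<Rightarrow> int) \<Rightarrow> ('f^2^2) set" where
  "M2o nu = {g. \<forall>i j. inO nu (g $ i $ j)}"

definition GL2o :: "('f::field \<Rightarrow> int) \<Rightarrow> ('f^2^2) set" where
  "GL2o nu = {g. g \<in> M2o nu \<and> isUnit nu (det g)}"

definition Kn :: "('f::field \<Rightarrow> int) \<Rightarrow> nat \<Rightarrow> ('f^2^2) set" where
  "Kn nu n = {g \<in> GL2o nu. \<forall>i j. inP nu (int n) ((g - mat 1) $ i $ j)}"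

definition K1 :: "('f::field \<Rightarrow> int) \<Rightarrow> nat \<Rightarrow> ('f^2^2) set" where
  "K1 nu m = {g \<in> GL2o nu. inP nu (int m) (g $ 2 $ 1) \<and> inP nu (int m) (g $ 2 $ 2 - 1)}"

definition torus :: "'f::field \<Rightarrow> ('f^2^2) set" where
  "torus alpha = {mk2 x y (- alpha * y) x | x y. (x, y) \<noteq> (0, 0)}"

definition w_alpha :: "'f::field \<Rightarrow> 'f^2^2" where
  "w_alpha alpha = mk2 0 1 (- alpha) 0"

definition KT :: "('f::field \<Rightarrow> int) \<Rightarrow> 'f \<Rightarrow> nat \<Rightarrow> ('f^2^2) set" where
  "KT nu alpha n = {g \<in> GL2o nu. inP nu (int n) (g $ 1 $ 1 - g $ 2 $ 2)
                               \<and> inP nu (int n) (g $ 2 $ 1 + g $ 1 $ 2 * alpha)}"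

definition ZKT :: "('f::field \<Rightarrow> int) \<Rightarrow> 'f \<Rightarrow> nat \<Rightarrow> ('f^2^2) set" where
  "ZKT nu alpha n = {z ** k | z k. z \<in> centre \<and> k \<in> KT nu alpha n}"

definition chiT :: "('f::field \<Rightarrow> int) \<Rightarrow> 'f \<Rightarrow> 'f \<Rightarrow> ('f \<Rightarrow> complex) \<Rightarrow> ('f \<times> 'f \<Rightarrow> complex)
                    \<Rightarrow> 'f \<Rightarrow> nat \<Rightarrow> 'f^2^2 \<Rightarrow> complex" where
  "chiT nu w alpha psi theta a n k =
     (SOME c. \<exists>x y g. (x, y) \<noteq> (0, 0) \<and> g \<in> M2o nu \<and>
        k = mk2 x y (- alpha * y) x ** (mat 1 + mat (w ^ n) ** g) \<and>
        c = theta (x, y) * psi (inverse w ^ n * a * trace (w_alpha alpha ** g)))"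

text \<open>The compactly induced representation c-Ind_H^G chi: functions on G, left
  (H,chi)-equivariant, supported on finitely many cosets H s (i.e. compactly
  supported modulo Z, as H is open and compact mod Z); G acts by right translation.\<close>
definition cind :: "('f::field^2^2) set \<Rightarrow> ('f^2^2 \<Rightarrow> complex) \<Rightarrow> ('f^2^2 \<Rightarrow> complex) set" where
  "cind H chi = {f. (\<forall>g. g \<notin> GL2 \<longrightarrow> f g = 0) \<and>
                    (\<forall>h\<in>H. \<forall>g\<in>GL2. f (h ** g) = chi h * f g) \<and>
                    (\<exists>S. finite S \<and> S \<subseteq> GL2 \<and> (\<forall>g. f g \<noteq> 0 \<longrightarrow> (\<exists>h\<in>H. \<exists>s\<in>S. g = h ** s)))}"

definition is_rep :: "(complex \<Rightarrow> 'v::ab_group_add \<Rightarrow> 'v) \<Rightarrow> ('f::field^2^2 \<Rightarrow> 'v \<Rightarrow> 'v) \<Rightarrow> bool" where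
  "is_rep sc rho \<longleftrightarrow> vector_space sc \<and>
     (\<forall>g\<in>GL2. \<forall>v w. rho g (v + w) = rho g v + rho g w) \<and>
     (\<forall>g\<in>GL2. \<forall>c v. rho g (sc c v) = sc c (rho g v)) \<and>
     rho (mat 1) = id \<and>
     (\<forall>g\<in>GL2. \<forall>h\<in>GL2. rho (g ** h) = rho g \<circ> rho h)"

definition smooth_rep :: "('f::field \<Rightarrow> int) \<Rightarrow> ('f^2^2 \<Rightarrow> 'v \<Rightarrow> 'v) \<Rightarrow> bool" where
  "smooth_rep nu rho \<longleftrightarrow> (\<forall>v. \<exists>m. \<forall>k\<in>Kn nu m. rho k v = v)"

definition irreducible_rep :: "(complex \<Rightarrow> 'v::ab_group_add \<Rightarrow> 'v) \<Rightarrow> ('f::field^2^2 \<Rightarrow> 'v \<Rightarrow> 'v) \<Rightarrow> bool" where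
  "irreducible_rep sc rho \<longleftrightarrow> (\<exists>v::'v. v \<noteq> 0) \<and>
     (\<forall>W. module.subspace sc W \<longrightarrow> (\<forall>g\<in>GL2. rho g ` W \<subseteq> W) \<longrightarrow> W = {0} \<or> W = UNIV)"

definition invariant_inner_product ::
  "(complex \<Rightarrow> 'v::ab_group_add \<Rightarrow> 'v) \<Rightarrow> ('f::field^2^2 \<Rightarrow> 'v \<Rightarrow> 'v) \<Rightarrow> ('v \<Rightarrow> 'v \<Rightarrow> complex) \<Rightarrow> bool" where
  "invariant_inner_product sc rho ip \<longleftrightarrow>
     (\<forall>u v w. ip (u + v) w = ip u w + ip v w) \<and>
     (\<forall>c v w. ip (sc c v) w = c * ip v w) \<and>
     (\<forall>v w. ip w v = cnj (ip v w)) \<and>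
     (\<forall>v. v \<noteq> 0 \<longrightarrow> Im (ip v v) = 0 \<and> 0 < Re (ip v v)) \<and>
     (\<forall>g\<in>GL2. \<forall>v w. ip (rho g v) (rho g w) = ip v w)"

text \<open>Supercuspidal: irreducible, smooth, and matrix coefficients compactly supported
  modulo the centre (equivalently: contained in finitely many cosets Z GL_2(o) s).\<close>
definition supercuspidal ::
  "('f::field \<Rightarrow> int) \<Rightarrow> (complex \<Rightarrow> 'v::ab_group_add \<Rightarrow> 'v) \<Rightarrow> ('f^2^2 \<Rightarrow> 'v \<Rightarrow> 'v) \<Rightarrow> ('v \<Rightarrow> 'v \<Rightarrow> complex) \<Rightarrow> bool" where
  "supercuspidal nu sc rho ip \<longleftrightarrow> irreducible_rep sc rho \<and> smooth_rep nu rho \<and>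
     (\<forall>v w. \<exists>S. finite S \<and> S \<subseteq> GL2 \<and>
        (\<forall>g\<in>GL2. ip (rho g v) w \<noteq> 0 \<longrightarrow> (\<exists>z\<in>centre. \<exists>k\<in>GL2o nu. \<exists>s\<in>S. g = z ** k ** s)))"

definition conductor :: "('f::field \<Rightarrow> int) \<Rightarrow> ('f^2^2 \<Rightarrow> 'v::zero \<Rightarrow> 'v) \<Rightarrow> nat" where
  "conductor nu rho = (LEAST m. \<exists>v. v \<noteq> 0 \<and> (\<forall>k\<in>K1 nu m. rho k v = v))"

definition minimal_vector :: "(complex \<Rightarrow> 'v \<Rightarrow> 'v) \<Rightarrow> ('f::field^2^2 \<Rightarrow> 'v::zero \<Rightarrow> 'v)
     \<Rightarrow> ('f^2^2) set \<Rightarrow> ('f^2^2 \<Rightarrow> complex) \<Rightarrow> 'v \<Rightarrow> bool" where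
  "minimal_vector sc rho H chi v \<longleftrightarrow> v \<noteq> 0 \<and> (\<forall>k\<in>H. rho k v = sc (chi k) v)"

end

theory Submission
  imports Defs "HOL-Library.Z2"
begin

text \<open>On \<open>Z K\<^sub>T(n)\<close> the minimal vector is an eigenvector with eigencharacter \<open>\<chi>\<close>, which gives the
  matrix coefficient there. Otherwise write \<open>g = t b\<close> with \<open>t\<close> in the torus (which lies in
  \<open>Z K\<^sub>T(n)\<close>) and \<open>b = (u q; 0 1)\<close>. As \<open>g \<notin> Z K\<^sub>T(n)\<close>, either \<open>u \<notin> 1 + \<frakp>\<^sup>n\<close> or \<open>q \<notin> \<frakp>\<^sup>n\<close>, and
  then a unipotent resp. diagonal \<open>k \<in> K\<^sub>T(n)\<close> and \<open>k' = b\<^sup>-\<^sup>1 k b \<in> K\<^sub>T(n)\<close> satisfy \<open>\<chi> k \<noteq> \<chi> k'\<close>,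
  because \<open>\<psi>\<close> is nontrivial on \<open>\<varpi>\<^sup>-\<^sup>1\<frako>\<close>. An eigenvector cannot have a nonzero matrix coefficient
  with such a non-intertwining \<open>b\<close>. The arithmetic input is that, \<open>-\<alpha>\<close> being a non-square unit and
  the residue characteristic odd, Hensel's lemma makes the norm of every primitive element of
  \<open>\<frako>\<^sub>E\<close> a unit.\<close>

lemma mk2_nth [simp]:
  "mk2 a b c d $ 1 $ 1 = a" "mk2 a b c d $ 1 $ 2 = b"
  "mk2 a b c d $ 2 $ 1 = c" "mk2 a b c d $ 2 $ 2 = d"
  by (simp_all add: mk2_def)

lemma mk2_eta: "(g::'a^2^2) = mk2 (g$1$1) (g$1$2) (g$2$1) (g$2$2)"
  unfolding vec_eq_iff forall_2 by simp

lemma mk2_eq_iff: "mk2 a b c d = mk2 a' b' c' d' \<longleftrightarrow> a = a' \<and> b = b' \<and> c = c' \<and> d = d'"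
  unfolding vec_eq_iff forall_2 by simp

lemma mk2_mult: "mk2 a b c d ** mk2 a' b' c' d' =
   mk2 (a*a'+b*c') (a*b'+b*d') (c*a'+d*c') (c*b'+d*d'::'a::semiring_1)"
  unfolding vec_eq_iff forall_2 by (simp add: matrix_matrix_mult_def sum_2)

lemma mat_mk2: "mat z = mk2 z 0 0 (z::'a::zero)"
  unfolding vec_eq_iff forall_2 by (simp add: mat_def)

lemma mk2_add: "mk2 a b c d + mk2 a' b' c' d' = mk2 (a+a') (b+b') (c+c') (d+(d'::'a::plus))"
  unfolding vec_eq_iff forall_2 by simp

lemma det_mk2: "det (mk2 a b c d) = a*d - b*(c::'a::comm_ring_1)"
  by (simp add: det_2)

lemma trace_mk2: "trace (mk2 a b c d) = a + (d::'a::semiring_1)"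
  by (simp add: trace_def sum_2)

lemma KT_mk2: "mk2 a b c d \<in> KT nu alpha n \<longleftrightarrow>
   inO nu a \<and> inO nu b \<and> inO nu c \<and> inO nu d \<and> isUnit nu (a*d - b*c) \<and>
   inP nu (int n) (a - d) \<and> inP nu (int n) (c + b * alpha)"
  by (auto simp: KT_def GL2o_def M2o_def forall_2 det_mk2)

lemma mat_mult_in_ZKT: "z \<noteq> 0 \<Longrightarrow> k \<in> KT nu alpha n \<Longrightarrow> mat z ** k \<in> ZKT nu alpha n"
  by (auto simp: ZKT_def centre_def)

lemma KT_subset_ZKT: "KT nu alpha n \<subseteq> ZKT nu alpha n"
  using mat_mult_in_ZKT[of 1] by auto

lemma ZKT_subset_GL2: "ZKT nu alpha n \<subseteq> GL2"
proof
  fix g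
  assume "g \<in> ZKT nu alpha n"
  then obtain z k where g: "g = mat z ** k" "z \<noteq> 0" "k \<in> KT nu alpha n"
    by (auto simp: ZKT_def centre_def)
  have "det k \<noteq> 0"
    using g(3) by (auto simp: KT_def GL2o_def isUnit_def)
  moreover have "det (mat z :: 'a^2^2) \<noteq> 0"
    using g(2) by (simp add: mat_mk2 det_mk2)
  ultimately show "g \<in> GL2"
    by (simp add: GL2_def g det_mul)
qed

text \<open>Comparing determinants forces \<open>u = det g / (x\<^sup>2 + \<alpha> y\<^sup>2)\<close>; the norm is nonzero since
  \<open>-\<alpha>\<close> is not a square.\<close>

lemma torus_upper_decomposition:
  fixes g :: "'f::field^2^2"
  assumes al: "alpha \<noteq> 0" and nonsq: "\<not> (\<exists>s. s^2 = - alpha)" and g: "det g \<noteq> 0"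
  obtains x y u q where "(x, y) \<noteq> (0, 0)" "u \<noteq> 0" "g = mk2 x y (- alpha * y) x ** mk2 u q 0 1"
proof -
  define a b c d where "a = g$1$1" "b = g$1$2" "c = g$2$1" "d = g$2$2"
  have gg: "g = mk2 a b c d"
    using mk2_eta[of g] by (simp add: a_b_c_d_def)
  define D where "D = a * d - b * c"
  define N where "N = a * a * alpha + c * c"
  have D0: "D \<noteq> 0"
    using g by (simp add: gg det_mk2 D_def)
  have N0: "N \<noteq> 0"
  proof
    assume N: "N = 0"
    show False
    proof (cases "a = 0")
      case True
      then show False
        using N D0 by (simp add: N_def D_def)
    next
      case False
      then have "(c / a)^2 = - alpha"
        using N by (simp add: N_def field_simps power2_eq_square eq_neg_iff_add_eq_0)
      then show False
        using nonsq by blast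
    qed
  qed
  define x where "x = a * alpha * D / N"
  define y where "y = - c * D / N"
  define u where "u = N / (alpha * D)"
  define q where "q = (c * d + alpha * a * b) / (alpha * D)"
  have "(x, y) \<noteq> (0, 0)"
    using D0 N0 al by (auto simp: x_def y_def D_def)
  moreover have "u \<noteq> 0"
    using N0 D0 al by (simp add: u_def)
  moreover have "x * u = a" "- alpha * y * u = c"
    using N0 D0 al by (simp_all add: x_def y_def u_def field_simps)
  moreover have "x * q + y = b"
  proof -
    have "x * q + y = (a * (c * d + alpha * a * b) - c * D) / N"
      using N0 D0 al by (simp add: x_def y_def q_def field_simps)
    also have "a * (c * d + alpha * a * b) - c * D = b * N"
      by (simp add: D_def N_def algebra_simps)
    finally show ?thesis
      using N0 by simp
  qed
  moreover have "- alpha * y * q + x = d"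
  proof -
    have "- alpha * y * q + x = (c * (c * d + alpha * a * b) + a * alpha * D) / N"
      using N0 D0 al by (simp add: x_def y_def q_def field_simps)
    also have "c * (c * d + alpha * a * b) + a * alpha * D = d * N"
      by (simp add: D_def N_def algebra_simps)
    finally show ?thesis
      using N0 by simp
  qed
  ultimately have "g = mk2 x y (- alpha * y) x ** mk2 u q 0 1"
    unfolding gg mk2_mult mk2_eq_iff by simp
  then show ?thesis
    using that \<open>(x, y) \<noteq> (0, 0)\<close> \<open>u \<noteq> 0\<close> by blast
qed

lemma one_plus_mk2: "mat 1 + mat W ** mk2 g1 g2 g3 g4 = mk2 (1 + W*g1) (W*g2) (W*g3) (1 + W*(g4::'a::comm_ring_1))"
  by (simp add: mat_mk2 mk2_mult mk2_add)

lemma trace_w_alpha_mk2: "trace (w_alpha alpha ** mk2 g1 g2 g3 g4) = g3 - alpha * (g2::'a::field)"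
  by (simp add: w_alpha_def mk2_mult trace_mk2)

lemma even_card_involution:
  assumes "finite X" "\<And>x. x \<in> X \<Longrightarrow> h x \<in> X" "\<And>x. x \<in> X \<Longrightarrow> h (h x) = x"
    "\<And>x. x \<in> X \<Longrightarrow> h x \<noteq> x"
  shows "even (card X)"
proof -
  have "(\<Sum>x\<in>X. 1 :: bit) = 0"
    by (rule sum_involution_eq_0[where h = h]) (use assms in auto)
  then have "even (of_nat (card X) :: bit)"
    by simp
  then show ?thesis
    by (simp only: even_of_nat_iff)
qed

definition residue_rel :: "('f::field \<Rightarrow> int) \<Rightarrow> ('f \<times> 'f) set" where
  "residue_rel nu = {(x, y). inO nu x \<and> inO nu y \<and> inP nu 1 (x - y)}"

lemma residue_card_eq: "residue_card nu = card ({x. inO nu x} // residue_rel nu)"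
  by (simp add: residue_card_def residue_rel_def)

locale local_field =
  fixes nu :: "'f::field_char_0 \<Rightarrow> int"
  assumes local_field: "nonarch_local_field nu"
begin

lemma nu_mult: "x \<noteq> 0 \<Longrightarrow> y \<noteq> 0 \<Longrightarrow> nu (x * y) = nu x + nu y"
  using local_field unfolding nonarch_local_field_def by blast

lemma nu_add_ge_min: "x \<noteq> 0 \<Longrightarrow> y \<noteq> 0 \<Longrightarrow> x + y \<noteq> 0 \<Longrightarrow> min (nu x) (nu y) \<le> nu (x + y)"
  using local_field unfolding nonarch_local_field_def by blast

lemma nu_one [simp]: "nu 1 = 0"
  using nu_mult[of 1 1] by simp

lemma nu_minus_one [simp]: "nu (-1) = 0"
  using nu_mult[of "-1" "-1"] by simp

lemma nu_minus [simp]: "nu (-x) = nu x"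
proof (cases "x = 0")
  case False
  then show ?thesis
    using nu_mult[of "-1" x] by simp
qed simp

lemma nu_inverse: "x \<noteq> 0 \<Longrightarrow> nu (inverse x) = - nu x"
  using nu_mult[of x "inverse x"] by simp

lemma nu_divide: "x \<noteq> 0 \<Longrightarrow> y \<noteq> 0 \<Longrightarrow> nu (x / y) = nu x - nu y"
  by (simp add: divide_inverse nu_mult nu_inverse)

lemma nu_power: "x \<noteq> 0 \<Longrightarrow> nu (x ^ k) = int k * nu x"
  by (induction k) (auto simp: nu_mult algebra_simps)

lemma inP_0 [simp]: "inP nu k 0"
  by (simp add: inP_def)

lemma inP_minus_iff [simp]: "inP nu k (-x) \<longleftrightarrow> inP nu k x"
  by (simp add: inP_def)

lemma inP_add: "inP nu k x \<Longrightarrow> inP nu k y \<Longrightarrow> inP nu k (x + y)"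
  using nu_add_ge_min[of x y] by (cases "x = 0 \<or> y = 0 \<or> x + y = 0") (auto simp: inP_def)

lemma inP_diff: "inP nu k x \<Longrightarrow> inP nu k y \<Longrightarrow> inP nu k (x - y)"
  using inP_add[of k x "-y"] by simp

lemma inP_mult: "inP nu j x \<Longrightarrow> inP nu k y \<Longrightarrow> inP nu (j + k) (x * y)"
  unfolding inP_def by (cases "x = 0 \<or> y = 0") (auto simp: nu_mult)

lemma inP_mono: "inP nu k x \<Longrightarrow> j \<le> k \<Longrightarrow> inP nu j x"
  unfolding inP_def by auto

lemma inP_imp_inO: "inP nu k x \<Longrightarrow> 0 \<le> k \<Longrightarrow> inO nu x"
  unfolding inO_def by (rule inP_mono)

lemma inO_mult_inP: "inO nu x \<Longrightarrow> inP nu k y \<Longrightarrow> inP nu k (x * y)"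
  using inP_mult[of 0 x k y] by (simp add: inO_def)

lemma inP_mult_inO: "inP nu k y \<Longrightarrow> inO nu x \<Longrightarrow> inP nu k (y * x)"
  using inO_mult_inP[of x k y] by (simp add: mult.commute)

lemma inO_add: "inO nu x \<Longrightarrow> inO nu y \<Longrightarrow> inO nu (x + y)"
  unfolding inO_def by (rule inP_add)

lemma inO_diff: "inO nu x \<Longrightarrow> inO nu y \<Longrightarrow> inO nu (x - y)"
  unfolding inO_def by (rule inP_diff)

lemma inO_mult: "inO nu x \<Longrightarrow> inO nu y \<Longrightarrow> inO nu (x * y)"
  unfolding inO_def using inP_mult[of 0 x 0 y] by simp

lemma inO_minus_iff [simp]: "inO nu (-x) \<longleftrightarrow> inO nu x"
  by (simp add: inO_def)

lemma inO_0 [simp]: "inO nu 0"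
  by (simp add: inO_def)

lemma inO_1 [simp]: "inO nu 1"
  by (simp add: inO_def inP_def)

lemma inO_power: "inO nu x \<Longrightarrow> inO nu (x ^ k)"
  by (induction k) (auto intro: inO_mult)

lemma nu_add_eq: "x \<noteq> 0 \<Longrightarrow> inP nu (nu x + 1) y \<Longrightarrow> nu (x + y) = nu x"
proof (cases "y = 0")
  case False
  assume x: "x \<noteq> 0" and y: "inP nu (nu x + 1) y"
  then have less: "nu x < nu y"
    using False by (simp add: inP_def)
  then have sum: "x + y \<noteq> 0"
    by (metis add_eq_0_iff nu_minus less_irrefl)
  have "nu x \<le> nu (x + y)"
    using nu_add_ge_min[OF x False sum] less by simp
  moreover have "min (nu (x + y)) (nu y) \<le> nu x"
    using nu_add_ge_min[of "x + y" "-y"] sum False x by simp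
  ultimately show ?thesis
    using less by linarith
qed simp

lemma isUnit_mult: "isUnit nu x \<Longrightarrow> isUnit nu y \<Longrightarrow> isUnit nu (x * y)"
  by (simp add: isUnit_def nu_mult)

lemma isUnit_imp_inO: "isUnit nu x \<Longrightarrow> inO nu x"
  by (simp add: isUnit_def inO_def inP_def)

lemma isUnit_add_inP: "isUnit nu x \<Longrightarrow> inP nu 1 e \<Longrightarrow> isUnit nu (x + e)"
proof -
  assume x: "isUnit nu x" and e: "inP nu 1 e"
  have "x + e \<noteq> 0"
  proof
    assume "x + e = 0"
    then have "e = -x"
      by (simp add: eq_neg_iff_add_eq_0 add.commute)
    then show False
      using x e by (simp add: isUnit_def inP_def)
  qed
  then show ?thesis
    using nu_add_eq[of x e] x e unfolding isUnit_def by auto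
qed

lemma isUnit_1 [simp]: "isUnit nu 1"
  by (simp add: isUnit_def)

lemma isUnit_one_plus: "inP nu 1 e \<Longrightarrow> isUnit nu (1 + e)"
  using isUnit_add_inP[of 1 e] by simp

lemma isUnit_inverse: "isUnit nu x \<Longrightarrow> isUnit nu (inverse x)"
  by (simp add: isUnit_def nu_inverse)

lemma inP_divide_isUnit: "inP nu k e \<Longrightarrow> isUnit nu u \<Longrightarrow> inP nu k (e / u)"
  using inP_mult_inO[of k e "inverse u"] isUnit_imp_inO[OF isUnit_inverse] by (simp add: divide_inverse)

lemma inP_1_if_not_isUnit: "inO nu x \<Longrightarrow> \<not> isUnit nu x \<Longrightarrow> inP nu 1 x"
  by (auto simp: inO_def inP_def isUnit_def)

lemma eq_0_if_inP_all:
  assumes "\<And>k. 0 \<le> k \<Longrightarrow> inP nu k x"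
  shows "x = 0"
  using assms[of "max 0 (nu x) + 1"] by (auto simp: inP_def)

lemma equiv_residue_rel: "equiv {x. inO nu x} (residue_rel nu)"
proof (rule equivI)
  show "refl_on {x. inO nu x} (residue_rel nu)"
    by (auto simp: refl_on_def residue_rel_def)
  show "residue_rel nu \<subseteq> {x. inO nu x} \<times> {x. inO nu x}"
    by (auto simp: residue_rel_def)
  show "sym (residue_rel nu)"
    unfolding sym_def residue_rel_def using inP_minus_iff[of 1 "_ - _"] by auto
  show "trans (residue_rel nu)"
    unfolding trans_def residue_rel_def using inP_add[of 1 "_ - _" "_ - _"] by fastforce
qed

lemma residue_class_shift:
  assumes "inO nu x" "inO nu c"
  shows "(\<lambda>y. y + c) ` (residue_rel nu `` {x}) = residue_rel nu `` {x + c}"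
proof
  show "(\<lambda>y. y + c) ` (residue_rel nu `` {x}) \<subseteq> residue_rel nu `` {x + c}"
    using assms by (auto simp: residue_rel_def intro: inO_add)
  show "residue_rel nu `` {x + c} \<subseteq> (\<lambda>y. y + c) ` (residue_rel nu `` {x})"
  proof
    fix z
    assume "z \<in> residue_rel nu `` {x + c}"
    then have "z - c \<in> residue_rel nu `` {x}"
      using assms by (auto simp: residue_rel_def intro: inO_diff simp: algebra_simps)
    then show "z \<in> (\<lambda>y. y + c) ` (residue_rel nu `` {x})"
      by force
  qed
qed

text \<open>If \<open>2 \<in> \<frakp>\<close>, translation by 1 is a fixed-point-free involution of the residue field.\<close>

lemma isUnit_2_if_odd_residue_card:
  assumes "odd (residue_card nu)"
  shows "isUnit nu 2"
proof (rule ccontr)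
  assume "\<not> isUnit nu 2"
  then have two: "inP nu 1 (2::'f)"
    using inP_1_if_not_isUnit inO_add[OF inO_1 inO_1] by simp
  let ?R = "residue_rel nu"
  let ?h = "\<lambda>C. (\<lambda>y. y + 1) ` C"
  have "even (card ({x. inO nu x} // ?R))"
  proof (rule even_card_involution[where h = ?h])
    show "finite ({x. inO nu x} // ?R)"
      using local_field unfolding nonarch_local_field_def residue_rel_def by blast
    fix C
    assume "C \<in> {x. inO nu x} // ?R"
    then obtain x where C: "C = ?R `` {x}" and x: "inO nu x"
      by (auto elim: quotientE)
    have x1: "inO nu (x + 1)"
      using inO_add[OF x inO_1] .
    have x2: "inO nu (x + 1 + 1)"
      using inO_add[OF x1 inO_1] .
    have hC: "?h C = ?R `` {x + 1}"
      using residue_class_shift[OF x inO_1] C by simp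
    then show "?h C \<in> {x. inO nu x} // ?R"
      using x1 by (auto intro: quotientI)
    have "(x + 1 + 1, x) \<in> ?R"
      using x2 x two by (simp add: residue_rel_def)
    then show "?h (?h C) = C"
      using residue_class_shift[OF x1 inO_1] hC C equiv_class_eq_iff[OF equiv_residue_rel]
      by metis
    have "(x + 1, x) \<notin> ?R"
      by (auto simp: residue_rel_def inP_def)
    then show "?h C \<noteq> C"
      using hC C eq_equiv_class_iff[OF equiv_residue_rel] x1 x by simp
  qed
  then show False
    using assms by (simp add: residue_card_eq)
qed

lemma newton_sqrt_step:
  assumes two: "isUnit nu 2" and t: "isUnit nu t" and m: "1 \<le> m" and e: "inP nu m (t^2 - c)"
  defines "d \<equiv> (t^2 - c) / (2 * t)"
  shows "inP nu m d" and "isUnit nu (t - d)" and "inP nu (2 * m) ((t - d)^2 - c)"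
proof -
  show d: "inP nu m d"
    unfolding d_def using inP_divide_isUnit[OF e isUnit_mult[OF two t]] .
  then show "isUnit nu (t - d)"
    using isUnit_add_inP[OF t, of "-d"] inP_mono[OF d m] by simp
  have "t \<noteq> 0"
    using t by (simp add: isUnit_def)
  then have "2 * t * d = t^2 - c"
    by (simp add: d_def)
  moreover have "(t - d)^2 - c = (t^2 - c) - 2 * t * d + d * d"
    by (simp add: power2_eq_square algebra_simps)
  ultimately have square: "(t - d)^2 - c = d * d"
    by simp
  show "inP nu (2 * m) ((t - d)^2 - c)"
    unfolding square mult_2 by (rule inP_mult[OF d d])
qed

lemma inP_Cauchy_if_successive:
  assumes "\<And>k. inP nu (int k) (S (Suc k) - S k)"
  shows "\<forall>k. \<exists>N. \<forall>m\<ge>N. \<forall>m'\<ge>N. inP nu k (S m - S m')"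
proof -
  have far: "inP nu (int N) (S (N + d) - S N)" for N d
  proof (induction d)
    case (Suc d)
    have "inP nu (int N) (S (Suc (N + d)) - S (N + d))"
      using assms[of "N + d"] inP_mono by fastforce
    from inP_add[OF this Suc] show ?case
      by simp
  qed simp
  show ?thesis
  proof (intro allI exI impI)
    fix k :: int and m m'
    assume "nat k \<le> m" "nat k \<le> m'"
    then have "inP nu (int (nat k)) ((S m - S (nat k)) - (S m' - S (nat k)))"
      using inP_diff[OF far[of "nat k" "m - nat k"] far[of "nat k" "m' - nat k"]] by simp
    then show "inP nu k (S m - S m')"
      using inP_mono by fastforce
  qed
qed

lemma inP_Cauchy_converges:
  fixes S :: "nat \<Rightarrow> 'f"
  assumes "\<forall>k. \<exists>N. \<forall>m\<ge>N. \<forall>m'\<ge>N. inP nu k (S m - S m')"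
  obtains L where "\<forall>k. \<exists>N. \<forall>m\<ge>N. inP nu k (S m - L)"
  using assms local_field unfolding nonarch_local_field_def by blast

lemma limit_of_approximate_square_roots:
  assumes L: "\<forall>k. \<exists>N. \<forall>m\<ge>N. inP nu k (S m - L)"
    and S: "\<And>m. inO nu (S m)" "\<And>m. inP nu (int m) (S m ^ 2 - c)"
  shows "L^2 = c"
proof -
  have "inP nu k (L^2 - c)" if k: "0 \<le> k" for k
  proof -
    obtain N where N: "\<forall>m\<ge>N. inP nu k (S m - L)"
      using L by blast
    define m where "m = max N (nat k)"
    have close: "inP nu k (S m - L)"
      using N by (simp add: m_def)
    have "inO nu L"
      using inO_diff[OF S(1)[of m] inP_imp_inO[OF close k]] by simp
    then have prod: "inP nu k ((L - S m) * (L + S m))"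
      using inP_mult_inO[of k "L - S m" "L + S m"] close inO_add[OF _ S(1)]
        inP_minus_iff[of k "S m - L"] by simp
    have defect: "inP nu k (S m ^2 - c)"
      using S(2)[of m] inP_mono[of "int m" _ k] by (simp add: m_def)
    have split: "(L - S m) * (L + S m) + (S m ^2 - c) = L^2 - c"
      by (simp add: algebra_simps power2_eq_square)
    show ?thesis
      using inP_add[OF prod defect] unfolding split .
  qed
  then have "L^2 - c = 0"
    by (rule eq_0_if_inP_all)
  then show ?thesis
    by simp
qed

lemma hensel_sqrt:
  assumes two: "isUnit nu 2" and s: "isUnit nu s" "inP nu 1 (s^2 - c)"
  shows "\<exists>L. L^2 = c"
proof -
  define S where "S = rec_nat s (\<lambda>_ t. t - (t^2 - c) / (2 * t))"
  have S0: "S 0 = s" and S_Suc: "\<And>k. S (Suc k) = S k - (S k ^2 - c) / (2 * S k)"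
    by (simp_all add: S_def)
  have S_good: "isUnit nu (S k) \<and> inP nu (int k + 1) (S k ^ 2 - c)" for k
  proof (induction k)
    case (Suc k)
    then have "isUnit nu (S (Suc k)) \<and> inP nu (2 * (int k + 1)) (S (Suc k) ^ 2 - c)"
      using newton_sqrt_step[OF two, of "S k" "int k + 1" c] by (simp add: S_Suc)
    then show ?case
      using inP_mono by fastforce
  qed (use s in \<open>simp add: S0\<close>)
  have "inP nu (int k) (S (Suc k) - S k)" for k
    using newton_sqrt_step(1)[OF two, of "S k" "int k + 1" c] S_good[of k] inP_mono
    by (fastforce simp: S_Suc)
  then obtain L where "\<forall>k. \<exists>N. \<forall>m\<ge>N. inP nu k (S m - L)"
    using inP_Cauchy_converges[OF inP_Cauchy_if_successive] by blast
  moreover have "inO nu (S m)" "inP nu (int m) (S m ^ 2 - c)" for m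
    using S_good[of m] isUnit_imp_inO inP_mono by fastforce+
  ultimately show ?thesis
    using limit_of_approximate_square_roots by blast
qed

lemma primitive_scaling:
  assumes "(x, y) \<noteq> (0::'f, 0)"
  obtains c x' y' where "c \<noteq> 0" "x = c * x'" "y = c * y'" "inO nu x'" "inO nu y'"
    "isUnit nu x' \<or> isUnit nu y'"
proof (cases "x \<noteq> 0 \<and> (y = 0 \<or> nu x \<le> nu y)")
  case True
  have "inO nu (y / x)"
    using True by (cases "y = 0") (auto simp: inO_def inP_def nu_divide)
  then show ?thesis
    using True that[of x 1 "y / x"] by auto
next
  case False
  then have y: "y \<noteq> 0"
    using assms by auto
  have "inO nu (x / y)"
    using False y by (cases "x = 0") (auto simp: inO_def inP_def nu_divide)
  then show ?thesis
    using y that[of y "x / y" 1] by auto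
qed

end

locale unramified_torus = local_field nu for nu :: "'f::field_char_0 \<Rightarrow> int" +
  fixes alpha :: 'f
  assumes isUnit_2: "isUnit nu 2" and isUnit_alpha: "isUnit nu alpha"
    and nonsquare: "\<not> (\<exists>s. s^2 = - alpha)"
begin

lemma alpha_ne_0: "alpha \<noteq> 0"
  using isUnit_alpha by (simp add: isUnit_def)

lemma inO_alpha: "inO nu alpha"
  using isUnit_imp_inO[OF isUnit_alpha] .

lemma norm_isUnit_if_primitive:
  assumes xy: "inO nu x" "inO nu y" "isUnit nu x \<or> isUnit nu y"
  shows "isUnit nu (x^2 + alpha * y^2)"
proof (rule ccontr)
  assume nonunit: "\<not> ?thesis"
  have "inO nu (x^2 + alpha * y^2)"
    using xy inO_alpha by (intro inO_add inO_mult inO_power) auto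
  then have p: "inP nu 1 (x^2 + alpha * y^2)"
    using inP_1_if_not_isUnit nonunit by blast
  show False
  proof (cases "isUnit nu y")
    case False
    then have x: "isUnit nu x" and y: "inP nu 1 y"
      using xy inP_1_if_not_isUnit by auto
    have "inP nu 1 (alpha * y^2)"
      using inO_mult_inP[OF inO_alpha inP_mult[OF y y]] inP_mono
      by (fastforce simp: power2_eq_square)
    then show False
      using isUnit_add_inP[OF isUnit_mult[OF x x]] nonunit by (simp add: power2_eq_square)
  next
    case True
    define s where "s = x / y"
    have "y \<noteq> 0"
      using True by (simp add: isUnit_def)
    then have "s^2 + alpha = (x^2 + alpha * y^2) / (y * y)"
      by (simp add: s_def field_simps power2_eq_square)
    then have sp: "inP nu 1 (s^2 - - alpha)"
      using inP_divide_isUnit[OF p isUnit_mult[OF True True]] by simp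
    have "isUnit nu s"
    proof (rule ccontr)
      assume "\<not> isUnit nu s"
      moreover have "inO nu s"
        using inP_divide_isUnit[of 0 x y] xy True by (simp add: s_def inO_def)
      ultimately have "inP nu 1 (s^2)"
        using inP_1_if_not_isUnit inP_mult[of 1 s 1 s] inP_mono by (fastforce simp: power2_eq_square)
      then have "isUnit nu (alpha + s^2)"
        using isUnit_add_inP[OF isUnit_alpha] by blast
      then show False
        using sp by (simp add: isUnit_def inP_def add.commute)
    qed
    then show False
      using hensel_sqrt[OF isUnit_2 _ sp] nonsquare by blast
  qed
qed

lemma inO_if_norm_isUnit:
  assumes xy: "(x, y) \<noteq> (0, 0)" and N: "isUnit nu (x^2 + alpha * y^2)"
  shows "inO nu x" "inO nu y"
proof -
  obtain c x' y' where c: "c \<noteq> 0" "x = c * x'" "y = c * y'" "inO nu x'" "inO nu y'"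
    "isUnit nu x' \<or> isUnit nu y'"
    using primitive_scaling[OF xy] by blast
  have N': "isUnit nu (x'^2 + alpha * y'^2)"
    using norm_isUnit_if_primitive[OF c(4-6)] .
  have "x^2 + alpha * y^2 = (c * c) * (x'^2 + alpha * y'^2)"
    by (simp add: c power2_eq_square algebra_simps)
  then have "nu (x^2 + alpha * y^2) = nu c + nu c + nu (x'^2 + alpha * y'^2)"
    using N' c(1) by (simp add: nu_mult isUnit_def)
  then have "nu c = 0"
    using N N' by (simp add: isUnit_def)
  then have "inO nu c"
    by (simp add: inO_def inP_def)
  then show "inO nu x" "inO nu y"
    using c by (auto intro: inO_mult)
qed

lemma torus_mult_upper_in_ZKT:
  assumes xy: "(x, y) \<noteq> (0, 0)"
    and u: "isUnit nu u" "inP nu (int n) (u - 1)" and q: "inP nu (int n) q"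
  shows "mk2 x y (- alpha * y) x ** mk2 u q 0 1 \<in> ZKT nu alpha n"
proof -
  obtain c x' y' where c: "c \<noteq> 0" "x = c * x'" "y = c * y'" "inO nu x'" "inO nu y'"
    "isUnit nu x' \<or> isUnit nu y'"
    using primitive_scaling[OF xy] by blast
  have qO: "inO nu q"
    using q inP_mono[of "int n" q 0] by (simp add: inO_def)
  define A B C D where "A = x' * u" "B = x' * q + y'" "C = - alpha * y' * u" "D = - alpha * y' * q + x'"
  have "A * D - B * C = (x'^2 + alpha * y'^2) * u"
    by (simp add: A_B_C_D_def algebra_simps power2_eq_square)
  then have "isUnit nu (A * D - B * C)"
    using isUnit_mult[OF norm_isUnit_if_primitive[OF c(4-6)] u(1)] by simp
  moreover have "A - D = x' * (u - 1) + alpha * (y' * q)" "C + B * alpha = alpha * (x' * q - y' * (u - 1))"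
    by (simp_all add: A_B_C_D_def algebra_simps)
  moreover have "inP nu (int n) (x' * (u - 1) + alpha * (y' * q))"
    using inO_mult_inP[OF c(4) u(2)] inO_mult_inP[OF inO_alpha inO_mult_inP[OF c(5) q]] by (rule inP_add)
  moreover have "inP nu (int n) (alpha * (x' * q - y' * (u - 1)))"
    using inO_mult_inP[OF inO_alpha inP_diff[OF inO_mult_inP[OF c(4) q] inO_mult_inP[OF c(5) u(2)]]] .
  moreover have "inO nu A" "inO nu B" "inO nu C" "inO nu D"
    using c isUnit_imp_inO[OF u(1)] qO inO_alpha
    by (auto simp: A_B_C_D_def intro!: inO_mult inO_add inO_diff)
  ultimately have "mk2 A B C D \<in> KT nu alpha n"
    unfolding KT_mk2 by simp
  moreover have "mk2 x y (- alpha * y) x ** mk2 u q 0 1 = mat c ** mk2 A B C D"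
    by (simp add: A_B_C_D_def mat_mk2 mk2_mult c algebra_simps)
  ultimately show ?thesis
    using mat_mult_in_ZKT[OF c(1)] by simp
qed

lemma isUnit_det_one_plus:
  assumes W: "inP nu 1 W" and g: "inO nu g1" "inO nu g2" "inO nu g3" "inO nu g4"
  shows "isUnit nu ((1 + W*g1) * (1 + W*g4) - W*g2 * (W*g3))"
proof -
  have "inO nu (g1 + g4 + W*g1*g4 - W*g2*g3)"
    using g inP_imp_inO[OF W] by (intro inO_add inO_diff inO_mult) auto
  then have "isUnit nu (1 + W * (g1 + g4 + W*g1*g4 - W*g2*g3))"
    using isUnit_one_plus inP_mult_inO W by blast
  then show ?thesis
    by (simp add: algebra_simps)
qed

lemma torus_factor_integral:
  assumes W: "inP nu 1 W" and xy: "(x, y) \<noteq> (0, 0)"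
    and XO: "inO nu X1" "inO nu X2" "inO nu X3" "inO nu X4"
    and gO: "inO nu g1" "inO nu g2" "inO nu g3" "inO nu g4"
    and eq: "mk2 (1 + W*X1) (W*X2) (W*X3) (1 + W*X4) =
      mk2 x y (- alpha * y) x ** mk2 (1 + W*g1) (W*g2) (W*g3) (1 + W*g4)"
  shows "inO nu x" "inO nu y"
proof -
  have "(1 + W*X1) * (1 + W*X4) - W*X2 * (W*X3) =
      (x^2 + alpha * y^2) * ((1 + W*g1) * (1 + W*g4) - W*g2 * (W*g3))"
    using arg_cong[OF eq, of det] by (simp add: det_mul det_mk2 power2_eq_square)
  then have "isUnit nu (x^2 + alpha * y^2)"
    using isUnit_det_one_plus[OF W XO] isUnit_det_one_plus[OF W gO]
    by (auto simp: isUnit_def nu_mult)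
  then show "inO nu x" "inO nu y"
    using inO_if_norm_isUnit[OF xy] by auto
qed

lemma torus_factor_near_one:
  assumes W: "W \<noteq> 0" "inP nu 1 W" and xy: "(x, y) \<noteq> (0, 0)"
    and X: "X \<in> M2o nu" and g: "g \<in> M2o nu"
    and eq: "mat 1 + mat W ** X = mk2 x y (- alpha * y) x ** (mat 1 + mat W ** g)"
  obtains u1 u2 r where "inO nu u1" "inO nu u2" "inO nu r" "x = 1 + W * u1" "y = W * u2"
    "trace (w_alpha alpha ** X) = - 2 * alpha * u2 + trace (w_alpha alpha ** g) + W * r"
proof -
  obtain g1 g2 g3 g4 where gg: "g = mk2 g1 g2 g3 g4"
    using mk2_eta by blast
  obtain X1 X2 X3 X4 where XX: "X = mk2 X1 X2 X3 X4"
    using mk2_eta by blast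
  have gO: "inO nu g1" "inO nu g2" "inO nu g3" "inO nu g4"
    using g by (auto simp: gg M2o_def forall_2)
  have XO: "inO nu X1" "inO nu X2" "inO nu X3" "inO nu X4"
    using X by (auto simp: XX M2o_def forall_2)
  have eq': "mk2 (1 + W*X1) (W*X2) (W*X3) (1 + W*X4) =
      mk2 x y (- alpha * y) x ** mk2 (1 + W*g1) (W*g2) (W*g3) (1 + W*g4)"
    using eq by (simp add: gg XX one_plus_mk2)
  then have E1: "1 + W*X1 = x * (1 + W*g1) + y * (W*g3)"
    and E2: "W*X2 = x * (W*g2) + y * (1 + W*g4)"
    and E3: "W*X3 = - alpha * y * (1 + W*g1) + x * (W*g3)"
    unfolding mk2_mult mk2_eq_iff by auto
  have xO: "inO nu x" and yO: "inO nu y"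
    using torus_factor_integral[OF W(2) xy XO gO eq'] by auto
  define u1 u2 where "u1 = X1 - x * g1 - y * g3" "u2 = X2 - x * g2 - y * g4"
  have u1O: "inO nu u1" and u2O: "inO nu u2"
    using XO gO xO yO by (auto simp: u1_u2_def intro!: inO_diff inO_mult)
  have x: "x = 1 + W * u1" and y: "y = W * u2"
    using E1 E2 by (simp_all add: u1_u2_def algebra_simps)
  have X2: "X2 = x * g2 + u2 * (1 + W * g4)"
    using E2 W(1) unfolding y by (simp add: algebra_simps)
      (metis mult_left_cancel distrib_left)
  have X3: "X3 = - alpha * u2 * (1 + W * g1) + x * g3"
    using E3 W(1) unfolding y by (simp add: algebra_simps)
      (metis mult_left_cancel distrib_left)
  define r where "r = u1 * (g3 - alpha * g2) - alpha * u2 * (g1 + g4)"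
  have "inO nu r"
    using u1O u2O gO inO_alpha by (auto simp: r_def intro!: inO_diff inO_mult inO_add)
  moreover have "trace (w_alpha alpha ** X) = - 2 * alpha * u2 + trace (w_alpha alpha ** g) + W * r"
    by (simp add: XX gg trace_w_alpha_mk2 X2 X3 x r_def algebra_simps)
  ultimately show ?thesis
    using that u1O u2O x y by blast
qed

end

definition intertwines :: "('f::field^2^2) set \<Rightarrow> ('f^2^2 \<Rightarrow> complex) \<Rightarrow> 'f^2^2 \<Rightarrow> bool" where
  "intertwines H chi g \<longleftrightarrow> (\<forall>k\<in>H. \<forall>k'\<in>H. k ** g = g ** k' \<longrightarrow> chi k = chi k')"

context
  fixes sc :: "complex \<Rightarrow> 'v::ab_group_add \<Rightarrow> 'v" and rho :: "'f::field^2^2 \<Rightarrow> 'v \<Rightarrow> 'v"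
    and ip :: "'v \<Rightarrow> 'v \<Rightarrow> complex"
  assumes ip: "invariant_inner_product sc rho ip"
begin

lemma ip_scale_left: "ip (sc c v) w = c * ip v w"
  using ip unfolding invariant_inner_product_def by blast

lemma ip_scale_right: "ip w (sc c v) = cnj c * ip w v"
proof -
  have "ip w (sc c v) = cnj (ip (sc c v) w)"
    using ip unfolding invariant_inner_product_def by metis
  also have "\<dots> = cnj c * cnj (ip v w)"
    by (simp add: ip_scale_left)
  also have "cnj (ip v w) = ip w v"
    using ip unfolding invariant_inner_product_def by metis
  finally show ?thesis .
qed

lemma ip_self_ne_0: "v \<noteq> 0 \<Longrightarrow> ip v v \<noteq> 0"
  using ip unfolding invariant_inner_product_def by (metis less_irrefl zero_complex.simps(1))

lemma ip_rho_rho: "g \<in> GL2 \<Longrightarrow> ip (rho g v) (rho g w) = ip v w"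
  using ip unfolding invariant_inner_product_def by blast

lemma eigenvalue_unimodular:
  assumes "v \<noteq> 0" "k \<in> GL2" "rho k v = sc c v"
  shows "c * cnj c = 1"
proof -
  have "ip v v = ip (rho k v) (rho k v)"
    using ip_rho_rho[OF assms(2)] by simp
  also have "\<dots> = c * cnj c * ip v v"
    using assms(3) by (simp add: ip_scale_left ip_scale_right)
  finally show ?thesis
    using ip_self_ne_0[OF assms(1)] by simp
qed

lemma ip_rho_eigen_left:
  assumes "v \<noteq> 0" "t \<in> GL2" "rho t v = sc c v"
  shows "ip (rho t u) v = c * ip u v"
proof -
  have "cnj c * ip (rho t u) v = ip u v"
    using ip_rho_rho[OF assms(2), of u v] assms(3) by (simp add: ip_scale_right)
  then have "c * cnj c * ip (rho t u) v = c * ip u v"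
    by (simp add: mult.assoc)
  then show ?thesis
    using eigenvalue_unimodular[OF assms] by simp
qed

lemma ip_rho_eq_0_if_not_intertwines:
  assumes rep: "is_rep sc rho" and v: "v \<noteq> 0" "\<forall>k\<in>H. rho k v = sc (chi k) v"
    and H: "H \<subseteq> GL2" and g: "g \<in> GL2" and not_int: "\<not> intertwines H chi g"
  shows "ip (rho g v) v = 0"
proof (rule ccontr)
  assume nz: "ip (rho g v) v \<noteq> 0"
  obtain k k' where k: "k \<in> H" "k' \<in> H" and comm: "k ** g = g ** k'" and ne: "chi k \<noteq> chi k'"
    using not_int unfolding intertwines_def by blast
  have kG: "k \<in> GL2" "k' \<in> GL2"
    using k H by auto
  have comp: "\<forall>g\<in>GL2. \<forall>h\<in>GL2. rho (g ** h) = rho g \<circ> rho h"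
    and lin: "\<forall>g\<in>GL2. \<forall>c v. rho g (sc c v) = sc c (rho g v)"
    using rep unfolding is_rep_def by blast+
  have "rho k (rho g v) = rho (k ** g) v"
    using comp kG g by simp
  also have "\<dots> = rho g (rho k' v)"
    using comp kG g by (simp add: comm)
  also have "\<dots> = sc (chi k') (rho g v)"
    using lin g v(2) k by simp
  finally have "rho k (rho g v) = sc (chi k') (rho g v)" .
  then have "chi k' * ip (rho g v) v = chi k * ip (rho g v) v"
    using ip_rho_eigen_left[OF v(1) kG(1), of "chi k" "rho g v"] v(2) k(1)
    by (simp add: ip_scale_left)
  then show False
    using nz ne by simp
qed

end

locale torus_character = unramified_torus nu alpha for nu :: "'f::field_char_0 \<Rightarrow> int" and alpha +
  fixes w a :: 'f and n :: nat and psi :: "'f \<Rightarrow> complex" and theta :: "'f \<times> 'f \<Rightarrow> complex"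
  assumes uniformizer: "w \<noteq> 0" "nu w = 1" and n_pos: "n \<ge> 1"
    and psi: "std_add_char nu w psi"
    and theta_trivial_on_F: "\<forall>x. x \<noteq> 0 \<longrightarrow> theta (x, 0) = 1"
    and isUnit_a: "isUnit nu a"
    and theta_via_psi: "\<forall>u1 u2. inO nu u1 \<and> inO nu u2 \<longrightarrow>
         psi (etr (emul alpha (inverse w ^ n * a, 0) (emul alpha (0, 1) (u1, u2))))
           = theta (1 + w ^ n * u1, w ^ n * u2)"
begin

abbreviation chi :: "'f^2^2 \<Rightarrow> complex" where
  "chi \<equiv> chiT nu w alpha psi theta a n"

lemma psi_add: "psi (x + y) = psi x * psi y"
  using psi by (simp add: std_add_char_def)

lemma psi_inO: "inO nu x \<Longrightarrow> psi x = 1"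
  using psi by (simp add: std_add_char_def)

lemma psi_nontrivial: "\<exists>x. inO nu x \<and> psi (inverse w * x) \<noteq> 1"
  using psi by (simp add: std_add_char_def)

lemma psi_ne_0: "psi x \<noteq> 0"
  using psi_add[of x "-x"] psi_inO[of 0] by auto

lemma psi_add_ne: "psi x \<noteq> 1 \<Longrightarrow> psi (x + y) \<noteq> psi y"
  using psi_add psi_ne_0[of y] by simp

lemma inP_w_power: "inP nu (int n) (w ^ n)"
  using uniformizer by (simp add: inP_def nu_power)

text \<open>\<open>chiT\<close> is defined by a choice over all factorizations \<open>t (1 + \<varpi>\<^sup>n g)\<close>; on \<open>1 + \<varpi>\<^sup>n X\<close> the
  value does not depend on the factorization, because \<open>theta\<close> on the torus part is matched
  by \<open>psi\<close> through the defining property of \<open>a\<close>.\<close>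

lemma chi_one_plus:
  assumes X: "X \<in> M2o nu"
  shows "chi (mat 1 + mat (w^n) ** X) = psi (inverse w ^ n * a * trace (w_alpha alpha ** X))"
  unfolding chiT_def
proof (rule some_equality)
  show "\<exists>x y g. (x, y) \<noteq> (0, 0) \<and> g \<in> M2o nu \<and>
      mat 1 + mat (w ^ n) ** X = mk2 x y (- alpha * y) x ** (mat 1 + mat (w ^ n) ** g) \<and>
      psi (inverse w ^ n * a * trace (w_alpha alpha ** X)) =
      theta (x, y) * psi (inverse w ^ n * a * trace (w_alpha alpha ** g))"
    using X theta_trivial_on_F by (intro exI[of _ 1] exI[of _ 0] exI[of _ X]) (simp add: mat_mk2[symmetric])
next
  fix c
  assume "\<exists>x y g. (x, y) \<noteq> (0, 0) \<and> g \<in> M2o nu \<and>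
      mat 1 + mat (w ^ n) ** X = mk2 x y (- alpha * y) x ** (mat 1 + mat (w ^ n) ** g) \<and>
      c = theta (x, y) * psi (inverse w ^ n * a * trace (w_alpha alpha ** g))"
  then obtain x y g where xy: "(x, y) \<noteq> (0, 0)" and g: "g \<in> M2o nu"
    and eq: "mat 1 + mat (w ^ n) ** X = mk2 x y (- alpha * y) x ** (mat 1 + mat (w ^ n) ** g)"
    and c: "c = theta (x, y) * psi (inverse w ^ n * a * trace (w_alpha alpha ** g))"
    by blast
  have W: "w ^ n \<noteq> 0" "inP nu 1 (w ^ n)"
    using uniformizer inP_mono[OF inP_w_power] n_pos by auto
  obtain u1 u2 r where u: "inO nu u1" "inO nu u2" and r: "inO nu r"
    and x: "x = 1 + w ^ n * u1" and y: "y = w ^ n * u2"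
    and tr: "trace (w_alpha alpha ** X) = - 2 * alpha * u2 + trace (w_alpha alpha ** g) + w ^ n * r"
    using torus_factor_near_one[OF W xy X g eq] by blast
  define P where "P = inverse w ^ n * a * (- 2 * alpha * u2)"
  have "theta (x, y) = psi (etr (emul alpha (inverse w ^ n * a, 0) (emul alpha (0, 1) (u1, u2))))"
    using theta_via_psi u by (simp add: x y)
  also have "\<dots> = psi P"
    by (simp add: P_def etr_def emul_def algebra_simps)
  finally have theta: "theta (x, y) = psi P" .
  have "inverse w ^ n * a * trace (w_alpha alpha ** X) =
      P + inverse w ^ n * a * trace (w_alpha alpha ** g) + a * r"
    using uniformizer by (simp add: P_def tr algebra_simps power_inverse)
  moreover have "psi (a * r) = 1"
    using psi_inO inO_mult[OF isUnit_imp_inO[OF isUnit_a] r] by simp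
  ultimately show "c = psi (inverse w ^ n * a * trace (w_alpha alpha ** X))"
    using c theta by (simp add: psi_add)
qed

definition beta :: 'f where
  "beta = inverse w ^ n * a * (- alpha) / w ^ n"

lemma beta_ne_0: "beta \<noteq> 0" and nu_beta: "nu beta = - 2 * int n"
proof -
  have "a \<noteq> 0"
    using isUnit_a by (simp add: isUnit_def)
  then show "beta \<noteq> 0" "nu beta = - 2 * int n"
    using uniformizer alpha_ne_0 isUnit_a isUnit_alpha
    by (simp_all add: beta_def nu_divide nu_mult nu_power nu_inverse isUnit_def)
qed

lemma upper_in_KT:
  assumes z: "inP nu (int n) z1" "inP nu (int n) z2"
  shows "mk2 (1 + z1) z2 0 1 \<in> KT nu alpha n"
proof -
  have "inP nu 1 z1" "inO nu z1" "inO nu z2"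
    using z n_pos inP_mono by (fastforce simp: inO_def)+
  then show ?thesis
    unfolding KT_mk2 using z isUnit_one_plus isUnit_imp_inO inP_mult_inO[OF z(2) inO_alpha]
    by auto
qed

lemma chi_upper:
  assumes z: "inP nu (int n) z1" "inP nu (int n) z2"
  shows "chi (mk2 (1 + z1) z2 0 1) = psi (beta * z2)"
proof -
  have "inO nu (z / w ^ n)" if "inP nu (int n) z" for z
    using that uniformizer by (cases "z = 0") (auto simp: inO_def inP_def nu_divide nu_power)
  then have "mk2 (z1 / w^n) (z2 / w^n) 0 0 \<in> M2o nu"
    using z by (simp add: M2o_def forall_2)
  from chi_one_plus[OF this] show ?thesis
    using uniformizer by (simp add: one_plus_mk2 trace_w_alpha_mk2 beta_def mult.assoc)
qed

lemma upper_not_in_KT_cases: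
  assumes u0: "u \<noteq> 0" and not_KT: "\<not> (isUnit nu u \<and> inP nu (int n) (u - 1) \<and> inP nu (int n) q)"
  shows "(u \<noteq> 1 \<and> nu (u - 1) < int n \<and> nu (u - 1) - nu u < int n) \<or> (q \<noteq> 0 \<and> nu q - nu u < int n)"
proof (rule ccontr)
  assume h: "\<not> ?thesis"
  show False
  proof (cases "u = 1")
    case True
    then show False
      using h not_KT by (auto simp: inP_def)
  next
    case u1: False
    have "int n \<le> nu (u - 1) \<and> nu u = 0"
    proof (cases "int n \<le> nu (u - 1)")
      case True
      then have "isUnit nu (1 + (u - 1))"
        using n_pos by (intro isUnit_one_plus) (simp add: inP_def)
      then show ?thesis
        using True by (simp add: isUnit_def)
    next
      case False
      then have d: "nu (u - 1) - nu u \<ge> int n"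
        using h u1 by auto
      have "nu u = 0"
      proof (rule ccontr)
        assume "nu u \<noteq> 0"
        then consider "nu u > 0" | "nu u < 0"
          by linarith
        then show False
        proof cases
          case 1
          then have "nu (-1 + u) = nu (-1::'f)"
            using u0 by (intro nu_add_eq) (simp_all add: inP_def)
          then show False
            using d 1 n_pos by simp
        next
          case 2
          then have "nu (u + -1) = nu u"
            using u0 by (intro nu_add_eq) (simp_all add: inP_def)
          then show False
            using d n_pos by simp
        qed
      qed
      then show ?thesis
        using d by simp
    qed
    then show False
      using h u0 u1 not_KT by (auto simp: inP_def isUnit_def)
  qed
qed

lemma not_intertwines_upper_diagonal:
  assumes u0: "u \<noteq> 0" and u1: "u \<noteq> 1"
    and far: "nu (u - 1) < int n" "nu (u - 1) - nu u < int n"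
  shows "\<not> intertwines (KT nu alpha n) chi (mk2 u q 0 1)"
proof -
  obtain z0 where z0: "inO nu z0" "psi (inverse w * z0) \<noteq> 1"
    using psi_nontrivial by blast
  have z00: "z0 \<noteq> 0" and "nu z0 \<ge> 0"
    using z0 psi_inO by (auto simp: inO_def inP_def)
  define z where "z = inverse w * z0 * u / (beta * (u - 1))"
  have "z \<noteq> 0" "nu z = nu z0 + nu u + 2 * int n - 1 - nu (u - 1)"
    using uniformizer z00 u0 u1 beta_ne_0 nu_beta
    by (simp_all add: z_def nu_mult nu_divide nu_inverse)
  then have z: "inP nu (int n) z" "inP nu (int n) (z / u)"
    using far \<open>nu z0 \<ge> 0\<close> u0 by (simp_all add: inP_def nu_divide)
  define k k' where "k = mk2 (1 + 0) z 0 (1::'f)" "k' = mk2 (1 + 0) (z / u) 0 (1::'f)"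
  have "beta * z = inverse w * z0 + beta * (z / u)"
  proof -
    have "beta * z = inverse w * z0 * (1 + 1 / (u - 1))"
      using beta_ne_0 u1 uniformizer by (simp add: z_def field_simps)
    also have "\<dots> = inverse w * z0 + beta * (z / u)"
      using beta_ne_0 u0 u1 uniformizer by (simp add: z_def field_simps)
    finally show ?thesis .
  qed
  moreover have "chi k = psi (beta * z)" "chi k' = psi (beta * (z / u))"
    unfolding k_k'_def using chi_upper[OF inP_0] z by auto
  ultimately have "chi k \<noteq> chi k'"
    using psi_add_ne[OF z0(2), of "beta * (z / u)"] by metis
  moreover have "k \<in> KT nu alpha n" "k' \<in> KT nu alpha n"
    unfolding k_k'_def using upper_in_KT[OF inP_0] z by auto
  moreover have "k ** mk2 u q 0 1 = mk2 u q 0 1 ** k'"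
    using u0 by (simp add: k_k'_def mk2_mult add.commute)
  ultimately show ?thesis
    unfolding intertwines_def by blast
qed

lemma not_intertwines_upper_off_diagonal:
  assumes u0: "u \<noteq> 0" and q0: "q \<noteq> 0" and far: "nu q - nu u < int n"
  shows "\<not> intertwines (KT nu alpha n) chi (mk2 u q 0 1)"
proof -
  obtain z0 where z0: "inO nu z0" "psi (inverse w * z0) \<noteq> 1"
    using psi_nontrivial by blast
  have z00: "z0 \<noteq> 0" and "nu z0 \<ge> 0"
    using z0 psi_inO by (auto simp: inO_def inP_def)
  define z where "z = inverse w * z0 * u / (beta * q)"
  have "z \<noteq> 0" "nu z = nu z0 + nu u + 2 * int n - 1 - nu q"
    using uniformizer z00 u0 q0 beta_ne_0 nu_beta
    by (simp_all add: z_def nu_mult nu_divide nu_inverse)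
  then have z: "inP nu (int n) z"
    using far \<open>nu z0 \<ge> 0\<close> by (simp add: inP_def)
  have qz: "q * z / u = inverse w * z0 / beta"
    using u0 q0 beta_ne_0 by (simp add: z_def field_simps)
  have "nu (inverse w * z0 / beta) = nu z0 - 1 + 2 * int n"
    using uniformizer z00 beta_ne_0 nu_beta by (simp add: nu_mult nu_divide nu_inverse)
  then have z': "inP nu (int n) (q * z / u)"
    unfolding qz using uniformizer z00 beta_ne_0 \<open>nu z0 \<ge> 0\<close> n_pos by (simp add: inP_def)
  define k k' where "k = mk2 (1 + z) 0 0 (1::'f)" "k' = mk2 (1 + z) (q * z / u) 0 (1::'f)"
  have "k \<in> KT nu alpha n" "k' \<in> KT nu alpha n"
    unfolding k_k'_def using upper_in_KT z z' by auto
  moreover have "k ** mk2 u q 0 1 = mk2 u q 0 1 ** k'"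
    using u0 by (simp add: k_k'_def mk2_mult algebra_simps)
  moreover have "chi k \<noteq> chi k'"
    using chi_upper[OF z inP_0] chi_upper[OF z z'] qz beta_ne_0 psi_inO[of 0] z0(2)
    by (simp add: k_k'_def)
  ultimately show ?thesis
    unfolding intertwines_def by blast
qed

lemma not_intertwines_upper:
  assumes "u \<noteq> 0" "\<not> (isUnit nu u \<and> inP nu (int n) (u - 1) \<and> inP nu (int n) q)"
  shows "\<not> intertwines (KT nu alpha n) chi (mk2 u q 0 1)"
  using upper_not_in_KT_cases[OF assms] not_intertwines_upper_diagonal not_intertwines_upper_off_diagonal
    assms(1) by blast

lemma matrix_coefficient_minimal_vector:
  fixes sc :: "complex \<Rightarrow> 'v::ab_group_add \<Rightarrow> 'v" and rho :: "'f^2^2 \<Rightarrow> 'v \<Rightarrow> 'v"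
  assumes rep: "is_rep sc rho" and ip: "invariant_inner_product sc rho ip"
    and v0: "minimal_vector sc rho (ZKT nu alpha n) chi v0" and g: "g \<in> GL2"
  shows "ip (rho g v0) v0 / ip v0 v0 = (if g \<in> ZKT nu alpha n then chi g else 0)"
proof -
  have v0_ne: "v0 \<noteq> 0" and eigen: "\<forall>k\<in>ZKT nu alpha n. rho k v0 = sc (chi k) v0"
    using v0 by (auto simp: minimal_vector_def)
  show ?thesis
  proof (cases "g \<in> ZKT nu alpha n")
    case True
    then show ?thesis
      using eigen ip_scale_left[OF ip] ip_self_ne_0[OF ip v0_ne] by simp
  next
    case False
    have "det g \<noteq> 0"
      using g by (simp add: GL2_def)
    then obtain x y u q where xy: "(x, y) \<noteq> (0, 0)" and u0: "u \<noteq> 0"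
      and g_eq: "g = mk2 x y (- alpha * y) x ** mk2 u q 0 1"
      by (rule torus_upper_decomposition[OF alpha_ne_0 nonsquare])
    define t b where "t = mk2 x y (- alpha * y) x" "b = mk2 u q 0 (1::'f)"
    have "\<not> (isUnit nu u \<and> inP nu (int n) (u - 1) \<and> inP nu (int n) q)"
      using torus_mult_upper_in_ZKT[OF xy] False g_eq by blast
    then have "\<not> intertwines (KT nu alpha n) chi b"
      using not_intertwines_upper[OF u0] by (simp add: t_b_def)
    moreover have bG: "b \<in> GL2"
      using u0 by (simp add: t_b_def GL2_def det_mk2)
    ultimately have b_coeff: "ip (rho b v0) v0 = 0"
      using ip_rho_eq_0_if_not_intertwines[OF ip rep v0_ne, of "KT nu alpha n" chi]
        eigen KT_subset_ZKT ZKT_subset_GL2 by blast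
    have "t = t ** mk2 1 0 0 1"
      by (simp add: mat_mk2[symmetric])
    then have tZ: "t \<in> ZKT nu alpha n"
      using torus_mult_upper_in_ZKT[OF xy isUnit_1, of n 0] by (simp add: t_b_def)
    then have tG: "t \<in> GL2"
      using ZKT_subset_GL2 by blast
    have "rho g v0 = rho t (rho b v0)"
      using rep tG bG g_eq unfolding is_rep_def t_b_def by simp
    then have "ip (rho g v0) v0 = chi t * ip (rho b v0) v0"
      using ip_rho_eigen_left[OF ip v0_ne tG] eigen tZ by simp
    then show ?thesis
      using False b_coeff by simp
  qed
qed

end

theorem proposition3p2:
  fixes nu :: "'f::field_char_0 \<Rightarrow> int" and w alpha a :: 'f and n :: nat
    and psi :: "'f \<Rightarrow> complex" and theta :: "'f \<times> 'f \<Rightarrow> complex"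
    and sc :: "complex \<Rightarrow> 'v::ab_group_add \<Rightarrow> 'v" and rho :: "'f^2^2 \<Rightarrow> 'v \<Rightarrow> 'v"
    and ip :: "'v \<Rightarrow> 'v \<Rightarrow> complex" and Lam :: "'v \<Rightarrow> ('f^2^2 \<Rightarrow> complex)" and v0 :: 'v
  assumes F: "nonarch_local_field nu" and q_odd: "odd (residue_card nu)"
    and unif: "w \<noteq> 0" "nu w = 1"
    and psi: "std_add_char nu w psi"
    and alpha: "isUnit nu alpha" "\<not> (\<exists>s. s ^ 2 = - alpha)"
    and n: "n \<ge> 1"
    and theta: "char_E nu alpha theta" "cond_E nu alpha theta = 2 * n"
      "\<forall>x. x \<noteq> 0 \<longrightarrow> theta (x, 0) = 1"
    and a: "isUnit nu a"
      "\<forall>u1 u2. inO nu u1 \<and> inO nu u2 \<longrightarrow>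
         psi (etr (emul alpha (inverse w ^ n * a, 0) (emul alpha (0, 1) (u1, u2))))
           = theta (1 + w ^ n * u1, w ^ n * u2)"
    and rep: "is_rep sc rho"
    and ip: "invariant_inner_product sc rho ip"
    and sc: "supercuspidal nu sc rho ip"
    and central: "\<forall>z\<in>centre. rho z = id"
    and cond: "conductor nu rho = 4 * n"
    and iso: "\<forall>v v'. Lam (v + v') = (\<lambda>x. Lam v x + Lam v' x)"
      "\<forall>c v. Lam (sc c v) = (\<lambda>x. c * Lam v x)"
      "bij_betw Lam UNIV (cind (ZKT nu alpha n) (chiT nu w alpha psi theta a n))"
      "\<forall>g\<in>GL2. \<forall>v. Lam (rho g v) = (\<lambda>x. Lam v (x ** g))"
    and v0: "minimal_vector sc rho (ZKT nu alpha n) (chiT nu w alpha psi theta a n) v0"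
  shows "\<forall>g\<in>GL2. ip (rho g v0) v0 / ip v0 v0 =
           (if g \<in> ZKT nu alpha n then chiT nu w alpha psi theta a n g else 0)"
proof -
  interpret local_field nu
    using F by unfold_locales
  interpret torus_character nu alpha w a n psi theta
    using isUnit_2_if_odd_residue_card[OF q_odd] alpha unif n psi theta(3) a by unfold_locales
  show ?thesis
    using matrix_coefficient_minimal_vector[OF rep ip v0] by blast
qed

end
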